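(* Let $\mathcal{M}$ be an $\epsilon$-differentially private mechanism on datasets with $n$ rows. Let $T = T_{A_k}\circ\cdots\circ T_{A_1}$ be a sequence of imputation transformations, one for each attribute $A_1,\ldots,A_k$, where each $T_{A_j}$ replaces all missing entries of attribute $A_j$ by a value computed from its input dataset and leaves all other entries unchanged. Then the composite mechanism $\mathcal{M}\circ T$ is $n\epsilon$-differentially private on incomplete datasets with $n$ rows.
   Context: A randomized mechanism $\mathcal{M}$ is $(\epsilon,\delta)$-DP if for all neighbouring datasets $D,D'$ (same number of rows, differing in exactly one row) and all measurable output sets $Z$, $\Pr[\mathcal{M}(D)\in Z]\le e^{\epsilon}\Pr[\mathcal{M}(D')\in Z]+\delta$; $\epsilon$-DP means $(\epsilon,0)$-DP. Datasets may contain missing cells. *)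

theory Defs
  imports "HOL-Probability.Probability"
begin

text \<open>A row assigns to each attribute an optional value (None = missing cell).
  A dataset is a list of rows.\<close>
type_synonym ('a, 'v) row = "'a \<Rightarrow> 'v option"
type_synonym ('a, 'v) dataset = "('a, 'v) row list"

definition neighbours :: "('a, 'v) dataset \<Rightarrow> ('a, 'v) dataset \<Rightarrow> bool" where
  "neighbours D D' \<longleftrightarrow> length D = length D' \<and>
     card {i. i < length D \<and> D ! i \<noteq> D' ! i} = 1"

definition dp :: "'z measure \<Rightarrow> ('a, 'v) dataset set \<Rightarrow> (('a, 'v) dataset \<Rightarrow> 'z measure)
                  \<Rightarrow> real \<Rightarrow> real \<Rightarrow> bool" where
  "dp S Dom M eps delta \<longleftrightarrow>
     (\<forall>D\<in>Dom. prob_space (M D) \<and> sets (M D) = sets S) \<and>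
     (\<forall>D\<in>Dom. \<forall>D'\<in>Dom. neighbours D D' \<longrightarrow>
        (\<forall>Z\<in>sets S. measure (M D) Z \<le> exp eps * measure (M D') Z + delta))"

definition pure_dp :: "'z measure \<Rightarrow> ('a, 'v) dataset set \<Rightarrow> (('a, 'v) dataset \<Rightarrow> 'z measure)
                  \<Rightarrow> real \<Rightarrow> bool" where
  "pure_dp S Dom M eps \<longleftrightarrow> dp S Dom M eps 0"

definition datasets_n :: "nat \<Rightarrow> ('a, 'v) dataset set" where
  "datasets_n n = {D. length D = n}"

definition is_imputation :: "'a \<Rightarrow> (('a, 'v) dataset \<Rightarrow> ('a, 'v) dataset) \<Rightarrow> bool" where
  "is_imputation A T \<longleftrightarrow> (\<exists>f :: ('a, 'v) dataset \<Rightarrow> 'v.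
     \<forall>D. T D = map (\<lambda>r. if r A = None then r(A := Some (f D)) else r) D)"

text \<open>compose [T1,...,Tk] = Tk o ... o T1\<close>
definition compose :: "('b \<Rightarrow> 'b) list \<Rightarrow> 'b \<Rightarrow> 'b" where
  "compose Ts D = fold (\<lambda>T X. T X) Ts D"

end

theory Submission
  imports Defs
begin

text \<open>An imputation step changes no row count, so it can at worst change every one of the \<open>n\<close>
  rows. Two neighbouring inputs therefore become two datasets of Hamming distance at most \<open>n\<close>,
  and group privacy, obtained by walking from one to the other through \<open>n\<close> neighbours,
  bounds the privacy loss by \<open>n \<epsilon>\<close>.\<close>

definition hamming_dist :: "('a, 'v) dataset \<Rightarrow> ('a, 'v) dataset \<Rightarrow> nat" where
  "hamming_dist D D' = card {i. i < length D \<and> D ! i \<noteq> D' ! i}"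

lemma hamming_dist_le_length: "hamming_dist D D' \<le> length D"
proof -
  have "{i. i < length D \<and> D ! i \<noteq> D' ! i} \<subseteq> {..<length D}" by auto
  then have "card {i. i < length D \<and> D ! i \<noteq> D' ! i} \<le> card {..<length D}"
    by (intro card_mono) auto
  then show ?thesis unfolding hamming_dist_def by simp
qed

lemma hamming_dist_self [simp]: "hamming_dist D D = 0"
  by (simp add: hamming_dist_def)

lemma hamming_dist_zero_iff_eq:
  assumes "length D = length D'"
  shows "hamming_dist D D' = 0 \<longleftrightarrow> D = D'"
  using assms by (auto simp: hamming_dist_def intro: nth_equalityI)

lemma hamming_dist_list_update_Suc:
  assumes "length D = length D'" and "i < length D" and "D ! i \<noteq> D' ! i"
  shows "hamming_dist D D' = Suc (hamming_dist (D[i := D' ! i]) D')"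
proof -
  define X where "X = {j. j < length D \<and> D ! j \<noteq> D' ! j}"
  have "{j. j < length D \<and> D[i := D' ! i] ! j \<noteq> D' ! j} = X - {i}"
    using assms by (auto simp: X_def nth_list_update)
  then have "hamming_dist (D[i := D' ! i]) D' = card (X - {i})"
    by (simp add: hamming_dist_def)
  moreover have "Suc (card (X - {i})) = card X"
    using assms by (intro card_Suc_Diff1) (auto simp: X_def)
  ultimately show ?thesis
    by (simp only: hamming_dist_def X_def[symmetric])
qed

lemma neighbours_list_update:
  assumes "i < length D" and "D ! i \<noteq> x"
  shows "neighbours D (D[i := x])"
proof -
  have "{j. j < length D \<and> D ! j \<noteq> D[i := x] ! j} = {i}"
    using assms by (auto simp: nth_list_update)
  then show ?thesis by (simp add: neighbours_def)
qed

lemma pure_dp_nonneg: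
  assumes "pure_dp S Dom M eps" and "D \<in> Dom" and "D' \<in> Dom" and "neighbours D D'"
  shows "0 \<le> eps"
proof -
  have M: "prob_space (M D)" "prob_space (M D')" "sets (M D) = sets S" "sets (M D') = sets S"
    using assms unfolding pure_dp_def dp_def by auto
  have "measure (M D) (space S) \<le> exp eps * measure (M D') (space S)"
    using assms unfolding pure_dp_def dp_def by auto
  moreover have "measure (M D) (space S) = 1" "measure (M D') (space S) = 1"
    using M by (metis prob_space.prob_space sets_eq_imp_space_eq)+
  ultimately show ?thesis by simp
qed

lemma pure_dp_group_privacy:
  assumes dp: "pure_dp S (datasets_n n) M eps"
    and "length D = n" and "length D' = n" and Z: "Z \<in> sets S"
  shows "measure (M D) Z \<le> exp (real (hamming_dist D D') * eps) * measure (M D') Z"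
  using assms(2,3)
proof (induction "hamming_dist D D'" arbitrary: D)
  case 0
  then have "D = D'" by (simp add: hamming_dist_zero_iff_eq)
  then show ?case by simp
next
  case (Suc k)
  then have "{i. i < n \<and> D ! i \<noteq> D' ! i} \<noteq> {}"
    unfolding hamming_dist_def by (metis card.empty nat.distinct(1))
  then obtain i where i: "i < n" "D ! i \<noteq> D' ! i" by auto
  define D1 where "D1 = D[i := D' ! i]"
  have len: "length D1 = n" using Suc.prems by (simp add: D1_def)
  have "hamming_dist D1 D' = k"
    using hamming_dist_list_update_Suc[of D D' i] Suc i by (simp add: D1_def)
  then have IH: "measure (M D1) Z \<le> exp (real k * eps) * measure (M D') Z"
    using Suc.hyps(1) len Suc.prems(2) by blast
  have "neighbours D D1"
    unfolding D1_def using neighbours_list_update i Suc.prems by metis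
  then have "measure (M D) Z \<le> exp eps * measure (M D1) Z"
    using dp Suc.prems len Z unfolding pure_dp_def dp_def datasets_n_def by auto
  also have "\<dots> \<le> exp eps * (exp (real k * eps) * measure (M D') Z)"
    using IH by simp
  also have "\<dots> = exp (real (Suc k) * eps) * measure (M D') Z"
    by (simp add: distrib_right mult_exp_exp[symmetric] algebra_simps)
  finally show ?case using Suc.hyps(2) by simp
qed

lemma pure_dp_comp_length_preserving:
  fixes T :: "('a, 'v) dataset \<Rightarrow> ('a, 'v) dataset"
  assumes dp: "pure_dp S (datasets_n n) M eps"
    and len: "\<And>D. length (T D) = length D"
  shows "pure_dp S (datasets_n n) (M \<circ> T) (real n * eps)"
  unfolding pure_dp_def dp_def
proof (intro conjI ballI impI)
  show "prob_space ((M \<circ> T) D)" and "sets ((M \<circ> T) D) = sets S"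
    if "D \<in> datasets_n n" for D
    using that dp len unfolding pure_dp_def dp_def datasets_n_def by simp_all
next
  fix D D' :: "('a, 'v) dataset" and Z
  assume D: "D \<in> datasets_n n" and D': "D' \<in> datasets_n n"
    and nb: "neighbours D D'" and Z: "Z \<in> sets S"
  have eps: "0 \<le> eps" using pure_dp_nonneg[OF dp D D' nb] .
  have lenT: "length (T D) = n" "length (T D') = n"
    using D D' len by (auto simp: datasets_n_def)
  have "measure (M (T D)) Z \<le> exp (real (hamming_dist (T D) (T D')) * eps) * measure (M (T D')) Z"
    using pure_dp_group_privacy[OF dp lenT Z] .
  also have "\<dots> \<le> exp (real n * eps) * measure (M (T D')) Z"
    using hamming_dist_le_length[of "T D" "T D'"] lenT eps
    by (intro mult_right_mono) (auto intro: mult_right_mono)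
  finally show "measure ((M \<circ> T) D) Z \<le> exp (real n * eps) * measure ((M \<circ> T) D') Z + 0"
    by simp
qed

lemma length_imputation: "is_imputation A T \<Longrightarrow> length (T D) = length D"
  unfolding is_imputation_def by auto

lemma length_compose:
  assumes "\<And>T D. T \<in> set Ts \<Longrightarrow> length (T D) = length D"
  shows "length (compose Ts D) = length D"
  using assms by (induction Ts arbitrary: D) (simp_all add: compose_def)

theorem theorem2:
  fixes S :: "'z measure"
    and M :: "('a::finite, 'v) dataset \<Rightarrow> 'z measure"
    and As :: "'a list"
    and Ts :: "(('a, 'v) dataset \<Rightarrow> ('a, 'v) dataset) list"
    and n :: nat and eps :: real
  assumes "pure_dp S (datasets_n n) M eps"
    and "distinct As" and "set As = UNIV"
    and "list_all2 is_imputation As Ts"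
  shows "pure_dp S (datasets_n n) (M \<circ> compose Ts) (real n * eps)"
proof (rule pure_dp_comp_length_preserving[OF assms(1)])
  have "\<exists>A :: 'a. is_imputation A T" if "T \<in> set Ts" for T
    using assms(4) that by (auto simp: list_all2_conv_all_nth in_set_conv_nth)
  then show "length (compose Ts D) = length D" for D
    by (intro length_compose) (auto dest: length_imputation)
qed

end
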